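(* Over directed graphs, there are first-order (FO) node classifiers expressible by ACR-GNNs which are not expressible in $\text{C}^2$. In particular, $\varphi_{\mathit{Lin}}(x)$ is such a classifier.
   Context: A directed graph is $G=(V,E,\lambda)$ with finite $V$, loop-free $E\subseteq V\times V$ and $\lambda:V\to\{0,1\}^d$, viewed as a first-order structure with unary predicates $P_1,\dots,P_d$ and binary predicate $E$. A node classifier is a formula with one free variable (or a function assigning a truth value to each node). $\text{C}^2$ is the two-variable fragment of first-order logic extended with counting quantifiers $\exists_k$. An ACR-GNN layer for directed graphs is a tuple $(\overleftarrow{\mathsf{agg}}, \overrightarrow{\mathsf{agg}}, \mathsf{comb}, \mathsf{read})$ updating labels by $\lambda'(v)=\mathsf{comb}\big(\lambda(v), \overleftarrow{\mathsf{agg}}(\{\!\{\lambda(w)\}\!\}_{w\in\overleftarrow{N}_G(v)}), \overrightarrow{\mathsf{agg}}(\{\!\{\lambda(w)\}\!\}_{w\in\overrightarrow{N}_G(v)}), \mathsf{read}(\{\!\{\lambda(w)\}\!\}_{w\in V})\big)$, where $\{\!\{\cdot\}\!\}$ denotes a multiset and $\overleftarrow{N}_G(v),\overrightarrow{N}_G(v)$ are in- and out-neighbourhoods; an ACR-GNN classifier is a fixed number of layers followed by a classification function. $\varphi_{\mathit{Lin}}(x)$ accepts a node of $G$ iff the edge relation of $G$ is a strict linear order. *)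

theory Defs
  imports Complex_Main "HOL-Library.Multiset"
begin

text \<open>Vertices are natural numbers (every finite graph is isomorphic to one of these).
  Labels are boolean lists; predicate P_i (0-based index i) holds at v iff the i-th bit of the label is set.\<close>

record graph =
  verts :: "nat set"
  edges :: "(nat \<times> nat) set"
  lab   :: "nat \<Rightarrow> bool list"

definition wf_graph :: "nat \<Rightarrow> graph \<Rightarrow> bool" where
  "wf_graph d G \<longleftrightarrow> finite (verts G) \<and> edges G \<subseteq> verts G \<times> verts G
     \<and> (\<forall>v. (v, v) \<notin> edges G) \<and> (\<forall>v\<in>verts G. length (lab G v) = d)"

type_synonym node_classifier = "graph \<Rightarrow> nat \<Rightarrow> bool"

text \<open>Variables are natural numbers. CEx k z \<phi> is the counting quantifier "there exist at least k z".
  Plain FO uses only k = 1 (ordinary existential quantifier); C2 uses only the variables 0 and 1.\<close>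

datatype cfo =
    CTrue
  | Pred nat nat
  | Edge nat nat
  | Eq nat nat
  | Neg cfo
  | Conj cfo cfo
  | CEx nat nat cfo

fun eval :: "graph \<Rightarrow> (nat \<Rightarrow> nat) \<Rightarrow> cfo \<Rightarrow> bool" where
  "eval G \<alpha> CTrue = True"
| "eval G \<alpha> (Pred i z) = (i < length (lab G (\<alpha> z)) \<and> lab G (\<alpha> z) ! i)"
| "eval G \<alpha> (Edge z z') = ((\<alpha> z, \<alpha> z') \<in> edges G)"
| "eval G \<alpha> (Eq z z') = (\<alpha> z = \<alpha> z')"
| "eval G \<alpha> (Neg \<phi>) = (\<not> eval G \<alpha> \<phi>)"
| "eval G \<alpha> (Conj \<phi> \<psi>) = (eval G \<alpha> \<phi> \<and> eval G \<alpha> \<psi>)"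
| "eval G \<alpha> (CEx k z \<phi>) = (k \<le> card {u \<in> verts G. eval G (\<alpha>(z := u)) \<phi>})"

fun free_vars :: "cfo \<Rightarrow> nat set" where
  "free_vars CTrue = {}"
| "free_vars (Pred i z) = {z}"
| "free_vars (Edge z z') = {z, z'}"
| "free_vars (Eq z z') = {z, z'}"
| "free_vars (Neg \<phi>) = free_vars \<phi>"
| "free_vars (Conj \<phi> \<psi>) = free_vars \<phi> \<union> free_vars \<psi>"
| "free_vars (CEx k z \<phi>) = free_vars \<phi> - {z}"

fun all_vars :: "cfo \<Rightarrow> nat set" where
  "all_vars CTrue = {}"
| "all_vars (Pred i z) = {z}"
| "all_vars (Edge z z') = {z, z'}"
| "all_vars (Eq z z') = {z, z'}"
| "all_vars (Neg \<phi>) = all_vars \<phi>"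
| "all_vars (Conj \<phi> \<psi>) = all_vars \<phi> \<union> all_vars \<psi>"
| "all_vars (CEx k z \<phi>) = insert z (all_vars \<phi>)"

fun is_FO :: "cfo \<Rightarrow> bool" where
  "is_FO (Neg \<phi>) = is_FO \<phi>"
| "is_FO (Conj \<phi> \<psi>) = (is_FO \<phi> \<and> is_FO \<psi>)"
| "is_FO (CEx k z \<phi>) = (k = 1 \<and> is_FO \<phi>)"
| "is_FO _ = True"

text \<open>C2: only the two variables 0 (= x) and 1 (= y), arbitrary counting quantifiers.\<close>
definition is_C2 :: "cfo \<Rightarrow> bool" where
  "is_C2 \<phi> \<longleftrightarrow> all_vars \<phi> \<subseteq> {0, 1}"

definition expresses :: "nat \<Rightarrow> cfo \<Rightarrow> node_classifier \<Rightarrow> bool" where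
  "expresses d \<phi> cls \<longleftrightarrow> free_vars \<phi> \<subseteq> {0} \<and>
     (\<forall>G. wf_graph d G \<longrightarrow> (\<forall>v\<in>verts G. \<forall>\<alpha>. \<alpha> 0 = v \<longrightarrow> (eval G \<alpha> \<phi> \<longleftrightarrow> cls G v)))"

definition FO_expressible :: "nat \<Rightarrow> node_classifier \<Rightarrow> bool" where
  "FO_expressible d cls \<longleftrightarrow> (\<exists>\<phi>. is_FO \<phi> \<and> expresses d \<phi> cls)"

definition C2_expressible :: "nat \<Rightarrow> node_classifier \<Rightarrow> bool" where
  "C2_expressible d cls \<longleftrightarrow> (\<exists>\<phi>. is_C2 \<phi> \<and> expresses d \<phi> cls)"

record layer =
  agg_in  :: "real list multiset \<Rightarrow> real list"
  agg_out :: "real list multiset \<Rightarrow> real list"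
  comb    :: "real list \<Rightarrow> real list \<Rightarrow> real list \<Rightarrow> real list \<Rightarrow> real list"
  readout :: "real list multiset \<Rightarrow> real list"

definition fixed_dims :: "layer \<Rightarrow> bool" where
  "fixed_dims L \<longleftrightarrow> (\<exists>a. \<forall>M. length (agg_in L M) = a) \<and> (\<exists>a. \<forall>M. length (agg_out L M) = a)
     \<and> (\<exists>a. \<forall>M. length (readout L M) = a) \<and> (\<exists>a. \<forall>x y z w. length (comb L x y z w) = a)"

definition in_nbrs :: "graph \<Rightarrow> nat \<Rightarrow> nat set" where
  "in_nbrs G v = {w \<in> verts G. (w, v) \<in> edges G}"

definition out_nbrs :: "graph \<Rightarrow> nat \<Rightarrow> nat set" where
  "out_nbrs G v = {w \<in> verts G. (v, w) \<in> edges G}"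

definition layer_step :: "graph \<Rightarrow> layer \<Rightarrow> (nat \<Rightarrow> real list) \<Rightarrow> (nat \<Rightarrow> real list)" where
  "layer_step G L f = (\<lambda>v. comb L (f v)
      (agg_in L (image_mset f (mset_set (in_nbrs G v))))
      (agg_out L (image_mset f (mset_set (out_nbrs G v))))
      (readout L (image_mset f (mset_set (verts G)))))"

fun run_layers :: "graph \<Rightarrow> layer list \<Rightarrow> (nat \<Rightarrow> real list) \<Rightarrow> (nat \<Rightarrow> real list)" where
  "run_layers G [] f = f"
| "run_layers G (L # Ls) f = run_layers G Ls (layer_step G L f)"

definition init_features :: "graph \<Rightarrow> nat \<Rightarrow> real list" where
  "init_features G v = map (\<lambda>b. if b then 1 else 0) (lab G v)"

definition ACR_expressible :: "nat \<Rightarrow> node_classifier \<Rightarrow> bool" where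
  "ACR_expressible d cls \<longleftrightarrow> (\<exists>(Ls :: layer list) (c :: real list \<Rightarrow> bool).
     (\<forall>L\<in>set Ls. fixed_dims L) \<and>
     (\<forall>G. wf_graph d G \<longrightarrow> (\<forall>v\<in>verts G. c (run_layers G Ls (init_features G) v) = cls G v)))"

definition phi_Lin :: node_classifier where
  "phi_Lin G v \<longleftrightarrow> strict_linear_order_on (verts G) (edges G)"

end

theory Submission
  imports Defs
begin

(* phi_Lin says that E is transitive and total (irreflexivity is part of being a graph),
   which is first-order.

   An ACR-GNN can check it through out-degrees: a finite irreflexive relation is a strict
   linear order iff out-degrees strictly decrease along edges and are pairwise distinct.
   One layer computes out-degrees, a second tests both conditions at every node (distinctness
   through the readout), and a third forms the global conjunction, again through the readout.

   C2 cannot: compare the order < on {0, ..., N - 1} with the tournament obtained by reversing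
   the single edge between a and a + 2, both far from the ends. For a C2 formula of quantifier
   rank q with counting thresholds at most K, the truth value under an assignment depends only
   on how the two variables relate to each other and on their distances to the two ends,
   truncated at q K. In the induction step, for each such type of witness the number of
   witnesses, capped at K, is the same in both graphs: the reversal moves at most one vertex
   between classes, and only between classes that have more than K elements anyway. *)

section \<open>First-order definability\<close>

lemma eval_CEx_1:
  "finite (verts G) \<Longrightarrow> eval G \<alpha> (CEx 1 z \<phi>) \<longleftrightarrow> (\<exists>u\<in>verts G. eval G (\<alpha>(z := u)) \<phi>)"
  by (auto simp: Suc_le_eq card_gt_0_iff)

definition Forall :: "nat \<Rightarrow> cfo \<Rightarrow> cfo" where
  "Forall z \<phi> = Neg (CEx 1 z (Neg \<phi>))"

lemma eval_Forall:
  "finite (verts G) \<Longrightarrow> eval G \<alpha> (Forall z \<phi>) \<longleftrightarrow> (\<forall>u\<in>verts G. eval G (\<alpha>(z := u)) \<phi>)"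
  using eval_CEx_1[of G \<alpha> z "Neg \<phi>"] by (simp add: Forall_def)

fun quantifier_rank :: "cfo \<Rightarrow> nat" where
  "quantifier_rank (Neg \<phi>) = quantifier_rank \<phi>"
| "quantifier_rank (Conj \<phi> \<psi>) = max (quantifier_rank \<phi>) (quantifier_rank \<psi>)"
| "quantifier_rank (CEx k z \<phi>) = Suc (quantifier_rank \<phi>)"
| "quantifier_rank _ = 0"

fun max_threshold :: "cfo \<Rightarrow> nat" where
  "max_threshold (Neg \<phi>) = max_threshold \<phi>"
| "max_threshold (Conj \<phi> \<psi>) = max (max_threshold \<phi>) (max_threshold \<psi>)"
| "max_threshold (CEx k z \<phi>) = max k (max_threshold \<phi>)"
| "max_threshold _ = 0"

definition transitivity_formula :: cfo where
  "transitivity_formula =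
     Forall 1 (Forall 2 (Forall 3 (Neg (Conj (Conj (Edge 1 2) (Edge 2 3)) (Neg (Edge 1 3))))))"

definition totality_formula :: cfo where
  "totality_formula =
     Forall 1 (Forall 2 (Neg (Conj (Neg (Eq 1 2)) (Conj (Neg (Edge 1 2)) (Neg (Edge 2 1))))))"

lemma FO_expressible_phi_Lin: "FO_expressible d phi_Lin"
  unfolding FO_expressible_def expresses_def
proof (intro exI conjI allI impI ballI)
  let ?\<phi> = "Conj transitivity_formula totality_formula"
  show "is_FO ?\<phi>" and "free_vars ?\<phi> \<subseteq> {0}"
    by (auto simp: transitivity_formula_def totality_formula_def Forall_def)
  fix G v and \<alpha> :: "nat \<Rightarrow> nat"
  assume "wf_graph d G"
  then have fin: "finite (verts G)" and sub: "edges G \<subseteq> verts G \<times> verts G"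
    and irr: "irrefl (edges G)"
    by (auto simp: wf_graph_def irrefl_def)
  have "eval G \<alpha> transitivity_formula \<longleftrightarrow> trans (edges G)"
    using sub by (auto simp: transitivity_formula_def eval_Forall[OF fin] trans_def)
  moreover have "eval G \<alpha> totality_formula \<longleftrightarrow> total_on (verts G) (edges G)"
    by (auto simp: totality_formula_def eval_Forall[OF fin] total_on_def)
  ultimately show "eval G \<alpha> ?\<phi> \<longleftrightarrow> phi_Lin G v"
    using irr by (simp add: phi_Lin_def strict_linear_order_on_def)
qed

section \<open>Out-degrees and an ACR-GNN\<close>

lemma strict_linear_order_on_iff_out_degree:
  fixes E :: "'a rel"
  defines "deg v \<equiv> card (E `` {v})"
  assumes fin: "finite V" and sub: "E \<subseteq> V \<times> V" and irr: "irrefl E"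
  shows "strict_linear_order_on V E \<longleftrightarrow> (\<forall>(w, u)\<in>E. deg u < deg w) \<and> inj_on deg V"
proof
  assume "strict_linear_order_on V E"
  then have tr: "trans E" and tot: "total_on V E"
    by (auto simp: strict_linear_order_on_def)
  have fin_succ: "finite (E `` {v})" for v
    using fin sub by (auto intro: finite_subset)
  have desc: "deg u < deg w" if "(w, u) \<in> E" for w u
  proof -
    have "E `` {u} \<subseteq> E `` {w}" using tr that by (auto dest: transD)
    moreover have "u \<in> E `` {w}" "u \<notin> E `` {u}" using that irr by (auto simp: irrefl_def)
    ultimately have "E `` {u} \<subset> E `` {w}" by blast
    then show ?thesis unfolding deg_def by (simp add: psubset_card_mono fin_succ)
  qed
  moreover have "inj_on deg V"
    using tot desc unfolding total_on_def by (metis inj_onI less_irrefl)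
  ultimately show "(\<forall>(w, u)\<in>E. deg u < deg w) \<and> inj_on deg V" by blast
next
  assume "(\<forall>(w, u)\<in>E. deg u < deg w) \<and> inj_on deg V"
  then have desc: "\<And>w u. (w, u) \<in> E \<Longrightarrow> deg u < deg w" and inj: "inj_on deg V"
    by auto
  \<comment> \<open>the deg w successors of w have pairwise distinct degrees below deg w, hence all of them\<close>
  have deg_image: "deg ` (E `` {w}) = {..< deg w}" if "w \<in> V" for w
  proof (rule card_subset_eq)
    show "deg ` (E `` {w}) \<subseteq> {..<deg w}" using desc by auto
    have "inj_on deg (E `` {w})" using inj by (rule inj_on_subset) (use sub in blast)
    then show "card (deg ` (E `` {w})) = card {..<deg w}"
      by (metis card_image card_lessThan deg_def)
  qed simp
  have edge_if_deg_less: "(x, z) \<in> E" if "x \<in> V" "z \<in> V" "deg z < deg x" for x z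
  proof -
    obtain z' where z': "(x, z') \<in> E" "deg z' = deg z"
      using deg_image[OF \<open>x \<in> V\<close>] \<open>deg z < deg x\<close> by (metis Image_singleton_iff imageE lessThan_iff)
    then have "z' = z" using inj sub \<open>z \<in> V\<close> by (auto dest: inj_onD)
    with z' show ?thesis by simp
  qed
  have "trans E"
  proof (rule transI)
    fix x y z assume "(x, y) \<in> E" "(y, z) \<in> E"
    then show "(x, z) \<in> E"
      using sub desc edge_if_deg_less by (meson SigmaD1 SigmaD2 less_trans subsetD)
  qed
  moreover have "total_on V E"
    unfolding total_on_def
    using inj edge_if_deg_less by (metis inj_on_contraD linorder_neqE_nat)
  ultimately show "strict_linear_order_on V E"
    using irr by (simp add: strict_linear_order_on_def)
qed

definition out_degree_layer :: layer where
  "out_degree_layer = \<lparr>agg_in = (\<lambda>M. []), agg_out = (\<lambda>M. [real (size M)]),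
     comb = (\<lambda>x a b r. [hd b]), readout = (\<lambda>M. [])\<rparr>"

definition descent_layer :: layer where
  "descent_layer = \<lparr>agg_in = (\<lambda>M. []), agg_out = (\<lambda>M. [Max (insert (-1) (hd ` set_mset M))]),
     comb = (\<lambda>x a b r. [if hd b < hd x \<and> hd r = 1 then 1 else 0]),
     readout = (\<lambda>M. [if size M = card (set_mset M) then 1 else 0])\<rparr>"

definition forall_layer :: layer where
  "forall_layer = \<lparr>agg_in = (\<lambda>M. []), agg_out = (\<lambda>M. []),
     comb = (\<lambda>x a b r. [hd r]), readout = (\<lambda>M. [if (\<forall>y\<in>#M. hd y = 1) then 1 else 0])\<rparr>"

lemma layer_step_out_degree_layer:
  "layer_step G out_degree_layer f v = [real (card (out_nbrs G v))]"
  by (simp add: layer_step_def out_degree_layer_def)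

lemma layer_step_descent_layer:
  assumes fin: "finite (verts G)" and f: "\<And>w. f w = [real (h w)]"
  shows "layer_step G descent_layer f v =
           [if (\<forall>u\<in>out_nbrs G v. h u < h v) \<and> inj_on h (verts G) then 1 else 0]"
proof -
  have fin_out: "finite (out_nbrs G v)" using fin by (simp add: out_nbrs_def)
  have "Max (insert (-1) (hd ` f ` out_nbrs G v)) < real (h v) \<longleftrightarrow> (\<forall>u\<in>out_nbrs G v. h u < h v)"
    by (subst Max_less_iff) (auto simp: fin_out f)
  moreover have "card (verts G) = card (f ` verts G) \<longleftrightarrow> inj_on h (verts G)"
    using inj_on_iff_eq_card[OF fin, of f] by (auto simp: inj_on_def f)
  ultimately show ?thesis
    by (simp add: layer_step_def descent_layer_def fin fin_out f)
qed

lemma layer_step_forall_layer: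
  assumes "finite (verts G)" and "\<And>w. f w = [if P w then 1 else 0]"
  shows "layer_step G forall_layer f v = [if \<forall>w\<in>verts G. P w then 1 else 0]"
  using assms by (auto simp: layer_step_def forall_layer_def)

lemma ACR_expressible_phi_Lin: "ACR_expressible d phi_Lin"
  unfolding ACR_expressible_def
proof (intro exI conjI allI impI ballI)
  let ?Ls = "[out_degree_layer, descent_layer, forall_layer]"
  show "fixed_dims L" if "L \<in> set ?Ls" for L
    using that by (auto simp: fixed_dims_def out_degree_layer_def descent_layer_def forall_layer_def)
  fix G v assume "wf_graph d G" and v: "v \<in> verts G"
  then have fin: "finite (verts G)" and sub: "edges G \<subseteq> verts G \<times> verts G"
    and irr: "irrefl (edges G)"
    by (auto simp: wf_graph_def irrefl_def)
  define deg where "deg = (\<lambda>w. card (out_nbrs G w))"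
  have out_nbrs: "out_nbrs G w = edges G `` {w}" for w
    using sub by (auto simp: out_nbrs_def)
  have "run_layers G ?Ls (init_features G) v =
     [if \<forall>w\<in>verts G. (\<forall>u\<in>out_nbrs G w. deg u < deg w) \<and> inj_on deg (verts G) then 1 else 0]"
  proof -
    have "layer_step G out_degree_layer (init_features G) w = [real (deg w)]" for w
      by (simp add: layer_step_out_degree_layer deg_def)
    note descent = layer_step_descent_layer[OF fin this]
    show ?thesis by (simp add: layer_step_forall_layer[OF fin descent])
  qed
  moreover have "phi_Lin G v \<longleftrightarrow> (\<forall>(w, u)\<in>edges G. deg u < deg w) \<and> inj_on deg (verts G)"
    using strict_linear_order_on_iff_out_degree[OF fin sub irr] by (simp add: phi_Lin_def deg_def out_nbrs)
  ultimately have "run_layers G ?Ls (init_features G) v = [if phi_Lin G v then 1 else 0]"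
    using sub v by (auto simp: out_nbrs)
  then show "(\<lambda>x. hd x = (1::real)) (run_layers G ?Ls (init_features G) v) = phi_Lin G v"
    by simp
qed

section \<open>Counting up to a threshold\<close>

lemma card_vimage_eq_sum_card_fibres:
  assumes "finite V" "finite X"
  shows "card {u\<in>V. f u \<in> X} = (\<Sum>x\<in>X. card {u\<in>V. f u = x})"
proof -
  have "{u\<in>V. f u \<in> X} = (\<Union>x\<in>X. {u\<in>V. f u = x})" by blast
  also have "card \<dots> = (\<Sum>x\<in>X. card {u\<in>V. f u = x})"
    using assms by (intro card_UN_disjoint) auto
  finally show ?thesis .
qed

lemma min_card_vimage_eq:
  assumes fin: "finite V" "finite V'"
    and classes: "\<And>x. min K (card {u\<in>V. f u = x}) = min K (card {u\<in>V'. g u = x})"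
  shows "min K (card {u\<in>V. f u \<in> R}) = min K (card {u\<in>V'. g u \<in> R})"
proof (cases "\<exists>x\<in>R. K \<le> card {u\<in>V. f u = x}")
  case True
  then obtain x where x: "x \<in> R" "K \<le> card {u\<in>V. f u = x}" by blast
  then have "K \<le> card {u\<in>V'. g u = x}" using classes[of x] by linarith
  moreover have "card {u\<in>V'. g u = x} \<le> card {u\<in>V'. g u \<in> R}"
    using x fin by (intro card_mono) auto
  moreover have "card {u\<in>V. f u = x} \<le> card {u\<in>V. f u \<in> R}"
    using x fin by (intro card_mono) auto
  ultimately show ?thesis using x by linarith
next
  case False
  then have same: "card {u\<in>V. f u = x} = card {u\<in>V'. g u = x}" if "x \<in> R" for x
    using classes[of x] that by (auto simp: min_def split: if_splits)
  define X where "X = (f ` V \<union> g ` V') \<inter> R"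
  have "finite X" using fin by (simp add: X_def)
  have "card {u\<in>V. f u \<in> R} = card {u\<in>V. f u \<in> X}"
    by (rule arg_cong[where f = card]) (auto simp: X_def)
  also have "\<dots> = (\<Sum>x\<in>X. card {u\<in>V. f u = x})"
    using fin(1) \<open>finite X\<close> by (rule card_vimage_eq_sum_card_fibres)
  also have "\<dots> = (\<Sum>x\<in>X. card {u\<in>V'. g u = x})"
    using same by (intro sum.cong) (auto simp: X_def)
  also have "\<dots> = card {u\<in>V'. g u \<in> X}"
    using fin(2) \<open>finite X\<close> by (rule card_vimage_eq_sum_card_fibres[symmetric])
  also have "\<dots> = card {u\<in>V'. g u \<in> R}"
    by (rule arg_cong[where f = card]) (auto simp: X_def)
  finally show ?thesis by simp
qed

lemma min_card_eq_if_classes_agree: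
  assumes fin: "finite V" "finite V'" and K: "0 < K"
    and classes: "\<And>x. min K (card {u\<in>V. f u = x}) = min K (card {u\<in>V'. g u = x})"
    and PQ: "\<And>u u'. u \<in> V \<Longrightarrow> u' \<in> V' \<Longrightarrow> f u = g u' \<Longrightarrow> P u \<longleftrightarrow> Q u'"
  shows "min K (card {u\<in>V. P u}) = min K (card {u\<in>V'. Q u})"
proof -
  have nonempty: "{u\<in>B. h u = x} \<noteq> {}"
    if "finite A" "\<And>x. min K (card {u\<in>A. h' u = x}) = min K (card {u\<in>B. h u = x})"
       "v \<in> A" "h' v = x" for A B h h' v x
  proof
    assume "{u\<in>B. h u = x} = {}"
    then have "min K (card {u\<in>A. h' u = x}) = 0"
      using that(2)[of x] by (simp only: card.empty min_0R)
    then have "card {u\<in>A. h' u = x} = 0" using K by simp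
    then show False using that(1,3,4) by auto
  qed
  define R where "R = f ` {u\<in>V. P u}"
  have "{u\<in>V. P u} = {u\<in>V. f u \<in> R}"
  proof (intro set_eqI iffI)
    fix u assume "u \<in> {u\<in>V. f u \<in> R}"
    then obtain v where "v \<in> V" "P v" "f v = f u" "u \<in> V" by (auto simp: R_def)
    moreover obtain u' where "u' \<in> V'" "g u' = f u"
      using nonempty[OF fin(1) classes \<open>u \<in> V\<close>] by blast
    ultimately show "u \<in> {u\<in>V. P u}" using PQ[of v u'] PQ[of u u'] by simp
  qed (auto simp: R_def)
  moreover have "{u\<in>V'. Q u} = {u\<in>V'. g u \<in> R}"
  proof (intro set_eqI iffI)
    fix u' assume u': "u' \<in> {u\<in>V'. Q u}"
    then obtain u where u: "u \<in> V" "f u = g u'"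
      using nonempty[OF fin(2) classes[symmetric], of u'] by blast
    then have "P u" using PQ[of u u'] u' by simp
    with u u' show "u' \<in> {u\<in>V'. g u \<in> R}" by (auto simp: R_def intro!: image_eqI[where x = u])
  next
    fix u' assume "u' \<in> {u\<in>V'. g u \<in> R}"
    then obtain u where "u \<in> V" "P u" "f u = g u'" "u' \<in> V'" by (auto simp: R_def)
    then show "u' \<in> {u\<in>V'. Q u}" using PQ by blast
  qed
  ultimately show ?thesis using min_card_vimage_eq[OF fin classes] by simp
qed

section \<open>C2 does not see the reversal of one edge\<close>

definition swapped_less :: "nat \<Rightarrow> nat \<Rightarrow> bool \<Rightarrow> nat \<Rightarrow> nat \<Rightarrow> bool" where
  "swapped_less a c s i j = (if (i = a \<and> j = c) \<or> (i = c \<and> j = a) then (i < j) \<noteq> s else i < j)"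

definition swapped_order_graph :: "nat \<Rightarrow> nat \<Rightarrow> nat \<Rightarrow> bool \<Rightarrow> nat \<Rightarrow> graph" where
  "swapped_order_graph N a c s d =
     \<lparr>verts = {..<N}, edges = {(i, j). i < N \<and> j < N \<and> swapped_less a c s i j},
      lab = (\<lambda>_. replicate d False)\<rparr>"

lemma swapped_order_graph_simps [simp]:
  "verts (swapped_order_graph N a c s d) = {..<N}"
  "edges (swapped_order_graph N a c s d) = {(i, j). i < N \<and> j < N \<and> swapped_less a c s i j}"
  "lab (swapped_order_graph N a c s d) = (\<lambda>_. replicate d False)"
  by (simp_all add: swapped_order_graph_def)

lemma swapped_less_False [simp]: "swapped_less a c False i j \<longleftrightarrow> i < j"
  by (auto simp: swapped_less_def)

lemma swapped_less_irrefl [simp]: "a \<noteq> c \<Longrightarrow> \<not> swapped_less a c s i i"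
  by (auto simp: swapped_less_def)

lemma swapped_less_other:
  "\<not> ((i = a \<and> j = c) \<or> (i = c \<and> j = a)) \<Longrightarrow> swapped_less a c s i j \<longleftrightarrow> i < j"
  unfolding swapped_less_def by (rule if_not_P)

lemma wf_swapped_order_graph: "a \<noteq> c \<Longrightarrow> wf_graph d (swapped_order_graph N a c s d)"
  by (auto simp: wf_graph_def)

lemma phi_Lin_unswapped: "phi_Lin (swapped_order_graph N a c False d) v"
  by (auto simp: phi_Lin_def strict_linear_order_on_def trans_def irrefl_def total_on_def)

lemma not_phi_Lin_swapped:
  assumes "a + 2 \<le> c" "c < N"
  shows "\<not> phi_Lin (swapped_order_graph N a c True d) v"
proof
  let ?E = "edges (swapped_order_graph N a c True d)"
  assume "phi_Lin (swapped_order_graph N a c True d) v"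
  then have "trans ?E" by (simp add: phi_Lin_def strict_linear_order_on_def)
  moreover have "(c, a) \<in> ?E" "(a, a + 1) \<in> ?E" "(c, a + 1) \<notin> ?E"
    using assms by (auto simp: swapped_less_def)
  ultimately show False by (meson transD)
qed

definition end_profile :: "nat \<Rightarrow> nat \<Rightarrow> nat \<Rightarrow> nat \<times> nat" where
  "end_profile N m i = (min i m, min (N - 1 - i) m)"

lemma end_profile_mono:
  "m \<le> m' \<Longrightarrow> end_profile N m' i = end_profile N m' j \<Longrightarrow> end_profile N m i = end_profile N m j"
  by (auto simp: end_profile_def min_def split: if_splits)

definition rel_type :: "nat \<Rightarrow> nat \<Rightarrow> bool \<Rightarrow> nat \<Rightarrow> nat \<Rightarrow> bool \<times> bool \<times> bool" where
  "rel_type a c s u b = (u = b, swapped_less a c s u b, swapped_less a c s b u)"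

lemma rel_type_False: "rel_type a c False u b = (u = b, u < b, b < u)"
  by (simp add: rel_type_def)

lemma rel_type_cases:
  "a \<noteq> c \<Longrightarrow> rel_type a c s u b \<in> {(True, False, False), (False, True, False), (False, False, True)}"
  by (auto simp: rel_type_def swapped_less_def)

lemma rel_type_swap_eq:
  "rel_type a c s b u = rel_type a c s' b' u' \<longleftrightarrow> rel_type a c s u b = rel_type a c s' u' b'"
  by (auto simp: rel_type_def)

definition profile_class ::
  "nat \<Rightarrow> nat \<Rightarrow> nat \<Rightarrow> nat \<Rightarrow> bool \<Rightarrow> nat \<Rightarrow> nat \<times> nat \<Rightarrow> bool \<times> bool \<times> bool \<Rightarrow> nat set" where
  "profile_class N m a c s b t \<rho> = {u \<in> {..<N}. end_profile N m u = t \<and> rel_type a c s u b = \<rho>}"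

lemma finite_profile_class [simp]: "finite (profile_class N m a c s b t \<rho>)"
  by (simp add: profile_class_def)

lemma min_card_profile_class_middle:
  assumes "m + K \<le> b" "b + m + K < N"
  shows "min K (card (profile_class N m a c False b (m, m) \<rho>)) =
           (if \<rho> = (True, False, False) then min K 1
            else if \<rho> \<in> {(False, True, False), (False, False, True)} then K else 0)"
proof -
  let ?S = "profile_class N m a c False b (m, m) \<rho>"
  consider "\<rho> = (True, False, False)" | "\<rho> = (False, True, False)" | "\<rho> = (False, False, True)"
    | "\<rho> \<notin> {(True, False, False), (False, True, False), (False, False, True)}"
    by blast
  then show ?thesis
  proof cases
    case 1
    then have "?S = {b}" using assms by (auto simp: profile_class_def end_profile_def rel_type_False)
    then show ?thesis using 1 by simp
  next
    case 2
    then have "{m..<b} \<subseteq> ?S" using assms by (auto simp: profile_class_def end_profile_def rel_type_False)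
    from card_mono[OF finite_profile_class this] show ?thesis using 2 assms by simp
  next
    case 3
    then have "{b + 1..<N - m} \<subseteq> ?S" using assms by (auto simp: profile_class_def end_profile_def rel_type_False)
    from card_mono[OF finite_profile_class this] show ?thesis using 3 assms by simp
  next
    case 4
    then have "?S = {}" by (auto simp: profile_class_def rel_type_False)
    then show ?thesis using 4 by auto
  qed
qed

lemma min_card_profile_class_unswapped:
  assumes "m + K \<le> m'" "2 * m' < N" "b < N" "b' < N"
    and profile: "end_profile N m' b = end_profile N m' b'"
  shows "min K (card (profile_class N m a c False b t \<rho>)) =
         min K (card (profile_class N m a c False b' t \<rho>))"
proof (cases "b = b'")
  case False
  then have middle: "m' \<le> x \<and> x + m' < N" if "x \<in> {b, b'}" for x
    using profile that assms(3,4) by (auto simp: end_profile_def min_def split: if_splits)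
  show ?thesis
  proof (cases "t = (m, m)")
    case True
    have "m + K \<le> x" "x + m + K < N" if "x \<in> {b, b'}" for x
      using middle[OF that] assms(1) by auto
    then show ?thesis using True by (simp add: min_card_profile_class_middle)
  next
    case False
    have "rel_type a c False u b = rel_type a c False u b'"
      if "u < N" "end_profile N m u = t" for u
    proof -
      from that False have "u < m \<or> N - 1 - u < m"
        by (auto simp: end_profile_def min_def split: if_splits)
      moreover have "m' \<le> b" "b + m' < N" "m' \<le> b'" "b' + m' < N" using middle by auto
      ultimately show ?thesis using assms(1) by (auto simp: rel_type_False)
    qed
    then have "profile_class N m a c False b t \<rho> = profile_class N m a c False b' t \<rho>"
      by (auto simp: profile_class_def)
    then show ?thesis by simp
  qed
qed simp

definition pair_type ::
  "nat \<Rightarrow> nat \<Rightarrow> nat \<Rightarrow> nat \<Rightarrow> bool \<Rightarrow> (nat \<Rightarrow> nat) \<Rightarrow> (nat \<times> nat) \<times> (nat \<times> nat) \<times> bool \<times> bool \<times> bool"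
where
  "pair_type N m a c s \<alpha> =
     (end_profile N m (\<alpha> 0), end_profile N m (\<alpha> 1), rel_type a c s (\<alpha> 0) (\<alpha> 1))"

lemma pair_type_fun_upd_eq:
  assumes "{z, z'} = {0, 1}"
    and "end_profile N m u = end_profile N m u'"
    and "end_profile N m (\<alpha> z') = end_profile N m (\<beta> z')"
    and "rel_type a c s u (\<alpha> z') = rel_type a c s' u' (\<beta> z')"
  shows "pair_type N m a c s (\<alpha>(z := u)) = pair_type N m a c s' (\<beta>(z := u'))"
  using assms rel_type_swap_eq[of a c s "\<alpha> 0" u s' "\<beta> 0" u']
  by (auto simp: pair_type_def doubleton_eq_iff)

context
  fixes N a c M :: nat
  assumes a_less_c: "a < c" and margin_a: "M < a" and margin_c: "c + M + 2 \<le> N"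
begin

lemma min_card_profile_class_swap:
  assumes "m + K \<le> M" "b < N"
  shows "min K (card (profile_class N m a c s b t \<rho>)) =
         min K (card (profile_class N m a c False b t \<rho>))"
proof (cases "b = a \<or> b = c")
  case False
  then have "rel_type a c s u b = rel_type a c False u b" for u
    by (auto simp: rel_type_def swapped_less_other)
  then show ?thesis by (simp add: profile_class_def)
next
  case True
  let ?Ss = "profile_class N m a c s b t \<rho>" and ?SF = "profile_class N m a c False b t \<rho>"
  define p where "p = (if b = a then c else a)"
  have "rel_type a c s u b = rel_type a c False u b" if "u \<noteq> p" for u
    using True that a_less_c by (auto simp: rel_type_def swapped_less_other p_def)
  then have same_off_p: "?Ss - {p} = ?SF - {p}" by (auto simp: profile_class_def)
  show ?thesis
  proof (cases "p \<in> ?Ss \<longleftrightarrow> p \<in> ?SF")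
    case True
    with same_off_p have "?Ss = ?SF" by blast
    then show ?thesis by simp
  next
    case False
    \<comment> \<open>then p lies in a class of strict predecessors or successors of b, all of size > K\<close>
    then obtain s' where p_in: "p \<in> profile_class N m a c s' b t \<rho>" by blast
    have "m \<le> p" "p + m < N" "p \<noteq> b"
      using True assms(1) a_less_c margin_a margin_c by (auto simp: p_def)
    with p_in have t: "t = (m, m)" and \<rho>: "\<rho> \<in> {(False, True, False), (False, False, True)}"
      using rel_type_cases[of a c s' p b] a_less_c
      by (auto simp: profile_class_def end_profile_def rel_type_def)
    have "m + (K + 1) \<le> b" "b + m + (K + 1) < N"
      using True assms(1) a_less_c margin_a margin_c by auto
    from min_card_profile_class_middle[OF this, of a c \<rho>]
    have "K + 1 \<le> card ?SF" using t \<rho> by (simp add: min_def split: if_splits)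
    moreover have "card ?SF - 1 \<le> card ?Ss"
    proof -
      have "card ?SF - 1 \<le> card (?SF - {p})" by (simp add: card_Diff_singleton_if)
      also have "\<dots> \<le> card ?Ss" using same_off_p by (intro card_mono) auto
      finally show ?thesis .
    qed
    ultimately show ?thesis by (simp add: min_def)
  qed
qed

lemma min_card_profile_class_eq:
  assumes "m + K \<le> m'" "m' \<le> M" "b < N" "b' < N"
    and "end_profile N m' b = end_profile N m' b'"
  shows "min K (card (profile_class N m a c s b t \<rho>)) =
         min K (card (profile_class N m a c s' b' t \<rho>))"
proof -
  have "m + K \<le> M" "2 * m' < N" using assms(1,2) a_less_c margin_a margin_c by linarith+
  have "min K (card (profile_class N m a c s b t \<rho>)) =
        min K (card (profile_class N m a c False b t \<rho>))"
    using \<open>m + K \<le> M\<close> assms(3) by (rule min_card_profile_class_swap)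
  also have "\<dots> = min K (card (profile_class N m a c False b' t \<rho>))"
    using assms(1) \<open>2 * m' < N\<close> assms(3-5) by (rule min_card_profile_class_unswapped)
  also have "\<dots> = min K (card (profile_class N m a c s' b' t \<rho>))"
    using \<open>m + K \<le> M\<close> assms(4) by (rule min_card_profile_class_swap[symmetric])
  finally show ?thesis .
qed

lemma eval_swapped_order_graph_eq:
  assumes "all_vars \<phi> \<subseteq> {0, 1}" and "0 < K" and "max_threshold \<phi> \<le> K"
    and "quantifier_rank \<phi> * K \<le> m" and "m \<le> M"
    and "\<alpha> ` {0, 1} \<subseteq> {..<N}" and "\<beta> ` {0, 1} \<subseteq> {..<N}"
    and "pair_type N m a c s \<alpha> = pair_type N m a c s' \<beta>"
  shows "eval (swapped_order_graph N a c s d) \<alpha> \<phi> \<longleftrightarrow> eval (swapped_order_graph N a c s' d) \<beta> \<phi>"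
  using assms
proof (induction \<phi> arbitrary: m \<alpha> \<beta>)
  case (Edge z z')
  have "rel_type a c s (\<alpha> 0) (\<alpha> 1) = rel_type a c s' (\<beta> 0) (\<beta> 1)"
    using Edge.prems(8) by (simp add: pair_type_def)
  then have "swapped_less a c s (\<alpha> i) (\<alpha> j) \<longleftrightarrow> swapped_less a c s' (\<beta> i) (\<beta> j)"
    if "i \<in> {0, 1}" "j \<in> {0, 1}" for i j
    using that a_less_c by (auto simp: rel_type_def)
  moreover have "z \<in> {0, 1}" "z' \<in> {0, 1}" using Edge.prems(1) by auto
  moreover from this have "\<alpha> z < N" "\<alpha> z' < N" "\<beta> z < N" "\<beta> z' < N"
    using Edge.prems(6,7) by auto
  ultimately show ?case by simp
next
  case (Eq z z')
  have "rel_type a c s (\<alpha> 0) (\<alpha> 1) = rel_type a c s' (\<beta> 0) (\<beta> 1)"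
    using Eq.prems(8) by (simp add: pair_type_def)
  then have "\<alpha> i = \<alpha> j \<longleftrightarrow> \<beta> i = \<beta> j" if "i \<in> {0, 1}" "j \<in> {0, 1}" for i j
    using that by (auto simp: rel_type_def)
  then show ?case using Eq.prems(1) by simp
next
  case (Neg \<phi>)
  then show ?case using Neg.IH[of m \<alpha> \<beta>] by simp
next
  case (Conj \<phi>\<^sub>1 \<phi>\<^sub>2)
  have "quantifier_rank \<phi>\<^sub>1 * K \<le> m" "quantifier_rank \<phi>\<^sub>2 * K \<le> m"
    using Conj.prems(4) by (simp_all add: nat_mult_max_left)
  then show ?case using Conj.prems Conj.IH(1)[of m \<alpha> \<beta>] Conj.IH(2)[of m \<alpha> \<beta>] by simp
next
  case (CEx k z \<psi>)
  let ?G = "swapped_order_graph N a c s d" and ?G' = "swapped_order_graph N a c s' d"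
  define z' where "z' = 1 - z"
  define m\<^sub>0 where "m\<^sub>0 = m - K"
  have z: "{z, z'} = {0, 1}" using CEx.prems(1) by (auto simp: z'_def)
  then have "z' \<in> {0, 1}" by blast
  then have range: "\<alpha> z' < N" "\<beta> z' < N" using CEx.prems(6,7) by blast+
  have "m\<^sub>0 + K \<le> m" "quantifier_rank \<psi> * K \<le> m\<^sub>0" using CEx.prems(4) by (auto simp: m\<^sub>0_def)
  have outer: "end_profile N m (\<alpha> z') = end_profile N m (\<beta> z')"
    using CEx.prems(8) \<open>z' \<in> {0, 1}\<close> by (auto simp: pair_type_def)
  then have inner: "end_profile N m\<^sub>0 (\<alpha> z') = end_profile N m\<^sub>0 (\<beta> z')"
    by (rule end_profile_mono[rotated]) (use \<open>m\<^sub>0 + K \<le> m\<close> in linarith)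
  let ?cl = "\<lambda>u. (end_profile N m\<^sub>0 u, rel_type a c s u (\<alpha> z'))"
  let ?cl' = "\<lambda>u. (end_profile N m\<^sub>0 u, rel_type a c s' u (\<beta> z'))"
  have classes: "min K (card {u\<in>{..<N}. ?cl u = x}) = min K (card {u\<in>{..<N}. ?cl' u = x})" for x
  proof -
    obtain t \<rho> where x: "x = (t, \<rho>)" by (cases x)
    have "min K (card (profile_class N m\<^sub>0 a c s (\<alpha> z') t \<rho>)) =
               min K (card (profile_class N m\<^sub>0 a c s' (\<beta> z') t \<rho>))"
      using \<open>m\<^sub>0 + K \<le> m\<close> CEx.prems(5) range outer by (rule min_card_profile_class_eq)
    then show ?thesis unfolding x profile_class_def by simp
  qed
  have step: "eval ?G (\<alpha>(z := u)) \<psi> \<longleftrightarrow> eval ?G' (\<beta>(z := u')) \<psi>"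
    if "u \<in> {..<N}" "u' \<in> {..<N}" "?cl u = ?cl' u'" for u u'
  proof (rule CEx.IH)
    show "all_vars \<psi> \<subseteq> {0, 1}" "max_threshold \<psi> \<le> K" "m\<^sub>0 \<le> M"
      using CEx.prems(1,3,5) \<open>m\<^sub>0 + K \<le> m\<close> by auto
    show "(\<alpha>(z := u)) ` {0, 1} \<subseteq> {..<N}" "(\<beta>(z := u')) ` {0, 1} \<subseteq> {..<N}"
      using CEx.prems(6,7) that(1,2) by auto
    show "pair_type N m\<^sub>0 a c s (\<alpha>(z := u)) = pair_type N m\<^sub>0 a c s' (\<beta>(z := u'))"
      using z inner that(3) by (intro pair_type_fun_upd_eq) auto
  qed (use CEx.prems(2) \<open>quantifier_rank \<psi> * K \<le> m\<^sub>0\<close> in simp_all)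
  have "min K (card {u\<in>{..<N}. eval ?G (\<alpha>(z := u)) \<psi>}) =
        min K (card {u\<in>{..<N}. eval ?G' (\<beta>(z := u)) \<psi>})"
    by (rule min_card_eq_if_classes_agree[OF finite_lessThan finite_lessThan CEx.prems(2) classes step])
  moreover have "k \<le> K" using CEx.prems(3) by simp
  ultimately have "k \<le> card {u\<in>{..<N}. eval ?G (\<alpha>(z := u)) \<psi>} \<longleftrightarrow>
                   k \<le> card {u\<in>{..<N}. eval ?G' (\<beta>(z := u)) \<psi>}"
    by (simp add: min_def split: if_splits)
  then show ?case by simp
qed simp_all

end

lemma not_C2_expressible_phi_Lin: "\<not> C2_expressible d phi_Lin"
proof
  assume "C2_expressible d phi_Lin"
  then obtain \<phi> where "is_C2 \<phi>" and expr: "expresses d \<phi> phi_Lin"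
    by (auto simp: C2_expressible_def)
  define K where "K = max_threshold \<phi> + 1"
  define M where "M = quantifier_rank \<phi> * K"
  define a where "a = M + 1"
  \<comment> \<open>c \<noteq> a + 1, since reversing an edge between neighbours yields another linear order\<close>
  define c where "c = a + 2"
  define N where "N = c + M + 2"
  let ?G = "\<lambda>s. swapped_order_graph N a c s d"
  have "eval (?G False) (\<lambda>_. 0) \<phi> \<longleftrightarrow> eval (?G True) (\<lambda>_. 0) \<phi>"
    by (rule eval_swapped_order_graph_eq[where M = M and K = K and m = M])
      (use \<open>is_C2 \<phi>\<close> in \<open>auto simp: is_C2_def K_def M_def a_def c_def N_def pair_type_def rel_type_def\<close>)
  moreover have "eval (?G s) (\<lambda>_. 0) \<phi> \<longleftrightarrow> phi_Lin (?G s) 0" for s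
    using expr wf_swapped_order_graph[of a c d N s] by (auto simp: expresses_def N_def c_def)
  ultimately show False
    using phi_Lin_unswapped not_phi_Lin_swapped[of a c N d 0] by (simp add: N_def c_def)
qed

theorem corollary1:
  fixes d :: nat
  shows "FO_expressible d phi_Lin \<and> ACR_expressible d phi_Lin \<and> \<not> C2_expressible d phi_Lin"
  using FO_expressible_phi_Lin ACR_expressible_phi_Lin not_C2_expressible_phi_Lin by blast

end
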